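(* Let $n\ge 3$ and consider the cycle graph on nodes $1,\dots,n$ with measurements $\widetilde{R}_{12},\widetilde{R}_{23},\dots,\widetilde{R}_{n-1,n},\widetilde{R}_{n1}\in\mathrm{SO}(3)$, and suppose all these measurements lie in a common one-parameter subgroup of $\mathrm{SO}(3)$, i.e. they are all rotations about a common axis. Let $E$ be the cycle error and $E_0,\dots,E_{n-1}$ its $n$-th roots as defined in the context. Then for each $k\in\{0,\dots,n-1\}$, the point $R=(R_1,\dots,R_n)\in\mathrm{SO}(3)^n$ given by $R_1=I_3$ and $$R_i=\Big(\prod_{s=1}^{i-1}\widetilde{R}_{s,s+1}\Big)^{\top}E_k^{\,i-1},\qquad i\in\{2,\dots,n\},$$ (the product taken from left to right, i.e. $\widetilde{R}_{12}\widetilde{R}_{23}\cdots\widetilde{R}_{i-1,i}$) is a stationary point of the problem $\min_{R\in\mathrm{SO}(3)^n} f(R)$.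
   Context: Cycle-graph rotation averaging setup. Let $n\ge 3$. The cycle graph has nodes $1,\dots,n$ and edges $\{i,i+1\}$ for $i=1,\dots,n-1$ together with $\{n,1\}$; write $i\sim j$ if $\{i,j\}$ is an edge. Each edge carries a measured rotation $\widetilde{R}_{ij}\in\mathrm{SO}(3)$, with the convention $\widetilde{R}_{ji}=\widetilde{R}_{ij}^\top$. Define the symmetric $3n\times 3n$ block matrix $\widetilde{R}$ whose $(i,j)$ $3\times3$ block is $I_3$ if $i=j$, $\widetilde{R}_{ij}$ if $i\sim j$, and $0$ otherwise. For $R=(R_1,\dots,R_n)\in\mathrm{SO}(3)^n$, write $R=[R_1^\top\ \cdots\ R_n^\top]^\top\in\mathbb{R}^{3n\times 3}$ and define $f(R):=-\operatorname{Tr}(R^\top\widetilde{R}R)$; the rotation averaging problem is to minimize $f$ over $\mathrm{SO}(3)^n$ (equivalently, maximize $\sum_{i\sim j}\operatorname{Tr}(R_i^\top\widetilde{R}_{ij}R_j)$). The cycle error is $E:=\widetilde{R}_{12}\widetilde{R}_{23}\cdots\widetilde{R}_{n-1,n}\widetilde{R}_{n1}\in\mathrm{SO}(3)$. Write $E=\exp(\gamma[\hat n]_\times)$ with unit axis $\hat n$ and angle $\gamma=\angle(E)\in[-\pi,\pi]$, where $[\hat n]_\times$ is the skew-symmetric cross-product matrix. For $k\in\{0,\dots,n-1\}$, $E_k:=\exp\big((\gamma/n-2k\pi/n)[\hat n]_\times\big)$, so that $E_k^n=E$ and $\angle(E_k)=\gamma/n-2k\pi/n$; $\{E_0,\dots,E_{n-1}\}$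 is the set of $n$-th roots of $E$. *)

theory Defs
  imports "HOL-Analysis.Analysis"
begin

type_synonym mat3 = "real^3^3"

definition SO3 :: "mat3 set" where
  "SO3 = {Q. rotation_matrix Q}"

primrec mpow :: "mat3 \<Rightarrow> nat \<Rightarrow> mat3" where
  "mpow A 0 = mat 1"
| "mpow A (Suc k) = mpow A k ** A"

definition mexp :: "mat3 \<Rightarrow> mat3" where
  "mexp A = (\<Sum>k. (1 / fact k) *\<^sub>R mpow A k)"

(* cross-product (hat) matrix [v]_x, so that [v]_x *v w = v x w *)
definition hat :: "real^3 \<Rightarrow> mat3" where
  "hat v = vector [vector [0, - v$3, v$2],
                   vector [v$3, 0, - v$1],
                   vector [- v$2, v$1, 0]]"

definition cyc_adj :: "nat \<Rightarrow> nat \<Rightarrow> nat \<Rightarrow> bool" where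
  "cyc_adj n i j \<longleftrightarrow> i \<in> {1..n} \<and> j \<in> {1..n} \<and>
     (j = i + 1 \<or> i = j + 1 \<or> (i = n \<and> j = 1) \<or> (i = 1 \<and> j = n))"

(* (i,j) block of the 3n x 3n matrix R-tilde *)
definition Rblk :: "nat \<Rightarrow> (nat \<Rightarrow> nat \<Rightarrow> mat3) \<Rightarrow> nat \<Rightarrow> nat \<Rightarrow> mat3" where
  "Rblk n Rt i j = (if i = j then mat 1 else if cyc_adj n i j then Rt i j else 0)"

(* f(R) = - Tr(R^T Rtilde R), written blockwise *)
definition fobj :: "nat \<Rightarrow> (nat \<Rightarrow> nat \<Rightarrow> mat3) \<Rightarrow> (nat \<Rightarrow> mat3) \<Rightarrow> real" where
  "fobj n Rt R = - (\<Sum>i\<in>{1..n}. \<Sum>j\<in>{1..n}.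
       trace (transpose (R i) ** Rblk n Rt i j ** R j))"

definition stationary :: "nat \<Rightarrow> (nat \<Rightarrow> nat \<Rightarrow> mat3) \<Rightarrow> (nat \<Rightarrow> mat3) \<Rightarrow> bool" where
  "stationary n Rt R \<longleftrightarrow> (\<forall>i\<in>{1..n}. R i \<in> SO3) \<and>
     (\<forall>c :: nat \<Rightarrow> real \<Rightarrow> mat3.
        (\<forall>i\<in>{1..n}. \<forall>t. c i t \<in> SO3) \<longrightarrow>
        (\<forall>i\<in>{1..n}. c i 0 = R i) \<longrightarrow>
        (\<forall>i\<in>{1..n}. c i differentiable (at 0)) \<longrightarrow>
        ((\<lambda>t. fobj n Rt (\<lambda>i. c i t)) has_real_derivative 0) (at 0))"

primrec pathprod :: "(nat \<Rightarrow> nat \<Rightarrow> mat3) \<Rightarrow> nat \<Rightarrow> mat3" where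
  "pathprod Rt 0 = mat 1"
| "pathprod Rt (Suc m) = pathprod Rt m ** Rt (Suc m) (Suc (Suc m))"

definition cycle_err :: "nat \<Rightarrow> (nat \<Rightarrow> nat \<Rightarrow> mat3) \<Rightarrow> mat3" where
  "cycle_err n Rt = pathprod Rt (n - 1) ** Rt n 1"

end

theory Submission
  imports Defs
begin

text \<open>At the candidate point \<open>R\<close> every edge block \<open>R i\<^sup>T Rt i (i+1) R (i+1)\<close> (and
  \<open>R n\<^sup>T Rt n 1 R 1\<close>) equals \<open>F = E\<^sub>k\<close>: the path products telescope, and \<open>F\<^sup>n = E\<close> closes
  the cycle. Hence every block row sum \<open>N i = (\<Sum>j. R i\<^sup>T Rblk i j R j)\<close> equals
  \<open>I + F + F\<^sup>T\<close> and is symmetric. Tangent vectors of \<open>SO(3)\<^sup>n\<close> at \<open>R\<close> have components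
  \<open>R i S i\<close> with \<open>S i\<close> skew, and the derivative of \<open>f\<close> along them is
  \<open>2 (\<Sum>i. tr (N i S i))\<close>, which vanishes since symmetric and skew matrices are
  trace-orthogonal. Rodrigues' closed form of \<open>exp (\<theta> [n]\<^sub>\<times>)\<close> shows that \<open>E\<^sub>k\<close> is a
  rotation with \<open>E\<^sub>k\<^sup>n = E\<close>.\<close>

lemma bounded_bilinear_matrix_matrix_mult:
  "bounded_bilinear ((**) :: real^'n^'m \<Rightarrow> real^'p^'n \<Rightarrow> real^'p^'m)"
proof -
  have "bilinear ((**) :: real^'n^'m \<Rightarrow> real^'p^'n \<Rightarrow> real^'p^'m)"
    unfolding bilinear_def
    by (auto intro!: linearI simp: matrix_add_ldistrib scalar_matrix_assoc matrix_scalar_ac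
        matrix_matrix_mult_def vec_eq_iff sum.distrib sum_distrib_left algebra_simps)
  then show ?thesis
    by (simp add: bilinear_conv_bounded_bilinear)
qed

lemma bounded_linear_transpose: "bounded_linear (transpose :: real^'n^'m \<Rightarrow> real^'m^'n)"
  by (auto intro!: linearI simp: transpose_def vec_eq_iff linear_conv_bounded_linear[symmetric])

lemma bounded_linear_trace: "bounded_linear (trace :: real^'n^'n \<Rightarrow> real)"
  by (auto intro!: linearI simp: trace_def sum.distrib sum_distrib_left linear_conv_bounded_linear[symmetric])

lemma matrix_add_rdistrib: "((A::'a::semiring_1^'n^'m) + B) ** C = A ** C + B ** C"
  by (simp add: matrix_matrix_mult_def vec_eq_iff sum.distrib sum_distrib_left algebra_simps)

lemma matrix_mult_sum_left: "(\<Sum>j\<in>J. A j) ** (B::real^'p^'n) = (\<Sum>j\<in>J. (A j :: real^'n^'m) ** B)"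
  by (rule bounded_bilinear.sum_left[OF bounded_bilinear_matrix_matrix_mult])

lemma matrix_mult_sum_right: "(A::real^'n^'m) ** (\<Sum>j\<in>J. B j) = (\<Sum>j\<in>J. A ** (B j :: real^'p^'n))"
  by (rule bounded_bilinear.sum_right[OF bounded_bilinear_matrix_matrix_mult])

lemma matrix_mult_uminus_left: "(- A) ** (B::real^'p^'n) = - ((A::real^'n^'m) ** B)"
  by (rule bounded_bilinear.minus_left[OF bounded_bilinear_matrix_matrix_mult])

lemma matrix_mult_uminus_right: "(A::real^'n^'m) ** (- B) = - (A ** (B::real^'p^'n))"
  by (rule bounded_bilinear.minus_right[OF bounded_bilinear_matrix_matrix_mult])

lemma transpose_add: "transpose ((A::'a::semiring_1^'n^'m) + B) = transpose A + transpose B"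
  by (simp add: transpose_def vec_eq_iff)

lemma transpose_uminus: "transpose (- (A::'a::ring_1^'n^'m)) = - transpose A"
  by (simp add: transpose_def vec_eq_iff)

lemma transpose_sum: "transpose (\<Sum>j\<in>J. A j) = (\<Sum>j\<in>J. transpose (A j :: real^'n^'m))"
  by (rule linear_sum[OF bounded_linear.linear[OF bounded_linear_transpose]])

lemma transpose_zero: "transpose (0::'a::semiring_1^'n^'m) = 0"
  by (simp add: transpose_def vec_eq_iff)

lemma trace_sum: "trace (\<Sum>j\<in>J. A j) = (\<Sum>j\<in>J. trace (A j :: real^'n^'n))"
  by (rule linear_sum[OF bounded_linear.linear[OF bounded_linear_trace]])

lemma trace_transpose: "trace (transpose (A::'a::semiring_1^'n^'n)) = trace A"
  by (simp add: trace_def transpose_def)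

lemma trace_symmetric_mult_skew:
  fixes N S :: "real^'n^'n"
  assumes "transpose N = N" and "transpose S = - S"
  shows "trace (N ** S) = 0"
proof -
  have "trace (N ** S) = trace (transpose (N ** S))"
    by (rule trace_transpose[symmetric])
  also have "\<dots> = trace (- (S ** N))"
    unfolding matrix_transpose_mul assms matrix_mult_uminus_left ..
  also have "\<dots> = - trace (N ** S)"
    by (simp add: trace_def sum_negf trace_mul_sym[of S N, unfolded trace_def])
  finally show ?thesis
    by simp
qed

lemma orthogonal_curve_derivative_skew:
  fixes c :: "real \<Rightarrow> real^'n^'n"
  assumes "\<And>t. orthogonal_matrix (c t)" and "(c has_vector_derivative D) (at 0)"
  shows "transpose (transpose (c 0) ** D) = - (transpose (c 0) ** D)"
proof -
  have "((\<lambda>t. transpose (c t) ** c t) has_vector_derivative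
          transpose (c 0) ** D + transpose D ** c 0) (at 0)"
    using bounded_bilinear.has_vector_derivative[OF bounded_bilinear_matrix_matrix_mult
        bounded_linear.has_vector_derivative[OF bounded_linear_transpose assms(2)] assms(2)] .
  moreover have "((\<lambda>t. transpose (c t) ** c t) has_vector_derivative 0) (at 0)"
    using assms(1) by (simp add: orthogonal_matrix_def)
  ultimately have "transpose (c 0) ** D + transpose D ** c 0 = 0"
    by (rule vector_derivative_unique_at)
  then show ?thesis
    by (simp add: matrix_transpose_mul eq_neg_iff_add_eq_0 add.commute)
qed

lemma has_vector_derivative_trace_sandwich:
  fixes f :: "real \<Rightarrow> real^'m^'n" and B :: "real^'p^'n" and g :: "real \<Rightarrow> real^'m^'p"
  assumes "(f has_vector_derivative f') (at x)" and "(g has_vector_derivative g') (at x)"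
  shows "((\<lambda>t. trace (transpose (f t) ** B ** g t)) has_vector_derivative
           trace (transpose (f x) ** B ** g' + transpose f' ** B ** g x)) (at x)"
proof -
  have "((\<lambda>t. transpose (f t) ** B) has_vector_derivative transpose f' ** B) (at x)"
    using bounded_bilinear.has_vector_derivative[OF bounded_bilinear_matrix_matrix_mult
        bounded_linear.has_vector_derivative[OF bounded_linear_transpose assms(1)]
        has_vector_derivative_const] by simp
  from bounded_bilinear.has_vector_derivative[OF bounded_bilinear_matrix_matrix_mult this assms(2)]
  show ?thesis
    by (rule bounded_linear.has_vector_derivative[OF bounded_linear_trace])
qed

lemma SO3_mult: "A \<in> SO3 \<Longrightarrow> B \<in> SO3 \<Longrightarrow> A ** B \<in> SO3"
  by (simp add: SO3_def rotation_matrix_def orthogonal_matrix_mul det_mul)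

lemma SO3_transpose: "A \<in> SO3 \<Longrightarrow> transpose A \<in> SO3"
  by (auto simp: SO3_def rotation_matrix_def orthogonal_matrix_def)

lemma SO3_orthogonal: "A \<in> SO3 \<Longrightarrow> transpose A ** A = mat 1 \<and> A ** transpose A = mat 1"
  by (simp add: SO3_def rotation_matrix_def orthogonal_matrix_def)

lemma SO3_mult_transpose_cancel: "A \<in> SO3 \<Longrightarrow> A ** (transpose A ** X) = X"
  by (simp add: SO3_orthogonal matrix_mul_assoc)

lemma mat_1_in_SO3: "mat 1 \<in> SO3"
  by (simp add: SO3_def rotation_matrix_def orthogonal_matrix_id)

lemma stationary_if_symmetric_block_row_sums:
  assumes R_SO3: "\<And>i. i \<in> {1..n} \<Longrightarrow> R i \<in> SO3"
    and Rblk_sym: "\<And>i j. i \<in> {1..n} \<Longrightarrow> j \<in> {1..n} \<Longrightarrow> Rblk n Rt j i = transpose (Rblk n Rt i j)"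
    and row_sym: "\<And>i. i \<in> {1..n} \<Longrightarrow>
        transpose (\<Sum>j\<in>{1..n}. transpose (R i) ** Rblk n Rt i j ** R j)
         = (\<Sum>j\<in>{1..n}. transpose (R i) ** Rblk n Rt i j ** R j)"
  shows "stationary n Rt R"
  unfolding stationary_def
proof (intro conjI ballI allI impI)
  fix c :: "nat \<Rightarrow> real \<Rightarrow> mat3"
  assume c_SO3: "\<forall>i\<in>{1..n}. \<forall>t. c i t \<in> SO3" and c_0: "\<forall>i\<in>{1..n}. c i 0 = R i"
    and c_diff: "\<forall>i\<in>{1..n}. c i differentiable (at 0)"
  let ?I = "{1..n}"
  define D where "D i = vector_derivative (c i) (at 0)" for i
  define S where "S i = transpose (R i) ** D i" for i
  define M where "M i j = transpose (R i) ** Rblk n Rt i j ** R j" for i j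
  define N where "N i = (\<Sum>j\<in>?I. M i j)" for i
  have c_deriv: "(c i has_vector_derivative D i) (at 0)" if "i \<in> ?I" for i
    using c_diff that by (simp add: D_def vector_derivative_works)
  have D_eq: "D i = R i ** S i" if "i \<in> ?I" for i
    using SO3_orthogonal[OF R_SO3[OF that]] by (simp add: S_def matrix_mul_assoc)
  have S_skew: "transpose (S i) = - S i" if "i \<in> ?I" for i
    using orthogonal_curve_derivative_skew[OF _ c_deriv[OF that]] c_SO3 c_0 that
    by (simp add: S_def SO3_def rotation_matrix_def)
  have N_sym: "transpose (N i) = N i" if "i \<in> ?I" for i
    using row_sym[OF that] by (simp add: N_def M_def)
  have M_sym: "M i j = transpose (M j i)" if "i \<in> ?I" "j \<in> ?I" for i j
    using Rblk_sym[OF that] by (simp add: M_def matrix_transpose_mul matrix_mul_assoc)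
  have column_sum: "(\<Sum>i\<in>?I. M i j) = transpose (N j)" if "j \<in> ?I" for j
  proof -
    have "(\<Sum>i\<in>?I. M i j) = (\<Sum>i\<in>?I. transpose (M j i))"
      using M_sym[OF _ that] by (rule sum.cong[OF refl])
    then show ?thesis
      by (simp add: N_def transpose_sum)
  qed
  have term_deriv: "((\<lambda>t. trace (transpose (c i t) ** Rblk n Rt i j ** c j t)) has_vector_derivative
       trace (M i j ** S j) + trace (transpose (S i) ** M i j)) (at 0)" if "i \<in> ?I" "j \<in> ?I" for i j
    using has_vector_derivative_trace_sandwich[OF c_deriv[OF that(1)] c_deriv[OF that(2)]] c_0 that
    by (simp add: D_eq M_def trace_add matrix_transpose_mul matrix_mul_assoc)
  have "(\<Sum>i\<in>?I. \<Sum>j\<in>?I. trace (M i j ** S j)) = (\<Sum>j\<in>?I. \<Sum>i\<in>?I. trace (M i j ** S j))"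
    by (rule sum.swap)
  also have "\<dots> = (\<Sum>j\<in>?I. trace (transpose (N j) ** S j))"
    using column_sum
    by (intro sum.cong refl) (simp add: trace_sum[symmetric] matrix_mult_sum_left[symmetric] del: atLeastAtMost_iff)
  also have "\<dots> = 0"
    by (intro sum.neutral ballI trace_symmetric_mult_skew) (simp_all add: N_sym S_skew)
  finally have first_half: "(\<Sum>i\<in>?I. \<Sum>j\<in>?I. trace (M i j ** S j)) = 0" .
  have "(\<Sum>i\<in>?I. \<Sum>j\<in>?I. trace (transpose (S i) ** M i j)) = (\<Sum>i\<in>?I. trace (transpose (S i) ** N i))"
    by (simp add: N_def trace_sum matrix_mult_sum_right)
  also have "\<dots> = (\<Sum>i\<in>?I. trace (N i ** transpose (S i)))"
    by (intro sum.cong refl trace_mul_sym)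
  also have "\<dots> = 0"
    by (intro sum.neutral ballI trace_symmetric_mult_skew) (simp_all add: N_sym S_skew transpose_uminus)
  finally have second_half: "(\<Sum>i\<in>?I. \<Sum>j\<in>?I. trace (transpose (S i) ** M i j)) = 0" .
  have "((\<lambda>t. fobj n Rt (\<lambda>i. c i t)) has_vector_derivative
      - (\<Sum>i\<in>?I. \<Sum>j\<in>?I. trace (M i j ** S j) + trace (transpose (S i) ** M i j))) (at 0)"
    unfolding fobj_def
    by (intro has_vector_derivative_minus has_vector_derivative_sum term_deriv)
  then show "((\<lambda>t. fobj n Rt (\<lambda>i. c i t)) has_real_derivative 0) (at 0)"
    using first_half second_half by (simp add: sum.distrib has_real_derivative_iff_has_vector_derivative)
qed (fact R_SO3)

lemma transpose_hat: "transpose (hat a) = - hat a"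
  unfolding vec_eq_iff forall_3 hat_def transpose_def by simp

lemma transpose_hat_sq: "transpose (hat a ** hat a) = hat a ** hat a"
  by (simp add: matrix_transpose_mul transpose_hat matrix_mult_uminus_left matrix_mult_uminus_right)

lemma hat_cube:
  assumes "norm a = 1"
  shows "hat a ** hat a ** hat a = - hat a"
proof -
  have unit: "a$1 * a$1 + a$2 * a$2 + a$3 * a$3 = 1"
    using assms by (simp add: norm_eq_1 inner_vec_def sum_3)
  show ?thesis
    unfolding vec_eq_iff forall_3 hat_def matrix_matrix_mult_def
    by (simp add: sum_3; use unit in algebra)
qed

definition rodrigues :: "real^3 \<Rightarrow> real \<Rightarrow> mat3" where
  "rodrigues a \<theta> = mat 1 + sin \<theta> *\<^sub>R hat a + (1 - cos \<theta>) *\<^sub>R (hat a ** hat a)"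

text \<open>The span of \<open>mat 1\<close>, \<open>hat a\<close> and \<open>hat a ** hat a\<close> is closed under products
  because \<open>hat a\<close> is annihilated by \<open>X ** X ** X + X\<close>.\<close>
lemma hat_poly_mult:
  assumes "norm a = 1"
  shows "(mat 1 + s1 *\<^sub>R hat a + c1 *\<^sub>R (hat a ** hat a)) ** (mat 1 + s2 *\<^sub>R hat a + c2 *\<^sub>R (hat a ** hat a))
     = mat 1 + (s1 + s2 - s1 * c2 - c1 * s2) *\<^sub>R hat a + (c1 + c2 + s1 * s2 - c1 * c2) *\<^sub>R (hat a ** hat a)"
proof -
  let ?K = "hat a"
  have cube: "?K ** ?K ** ?K = - ?K"
    by (rule hat_cube[OF assms])
  have "?K ** (?K ** ?K) = - ?K" and "(?K ** ?K) ** (?K ** ?K) = - (?K ** ?K)"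
    by (simp_all only: matrix_mul_assoc cube matrix_mult_uminus_left)
  then show ?thesis
    by (simp add: matrix_add_ldistrib matrix_add_rdistrib matrix_scalar_ac scalar_matrix_assoc[symmetric]
        cube algebra_simps)
qed

lemma rodrigues_add:
  assumes "norm a = 1"
  shows "rodrigues a x ** rodrigues a y = rodrigues a (x + y)"
proof -
  have "sin x + sin y - sin x * (1 - cos y) - (1 - cos x) * sin y = sin (x + y)"
    and "(1 - cos x) + (1 - cos y) + sin x * sin y - (1 - cos x) * (1 - cos y) = 1 - cos (x + y)"
    by (simp_all add: sin_add cos_add algebra_simps)
  then show ?thesis
    unfolding rodrigues_def hat_poly_mult[OF assms] by simp
qed

lemma rodrigues_0 [simp]: "rodrigues a 0 = mat 1"
  by (simp add: rodrigues_def)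

lemma transpose_rodrigues: "transpose (rodrigues a x) = rodrigues a (- x)"
  by (simp add: rodrigues_def transpose_add transpose_scalar transpose_hat transpose_hat_sq)

lemma mpow_rodrigues:
  assumes "norm a = 1"
  shows "mpow (rodrigues a x) m = rodrigues a (real m * x)"
  by (induction m) (simp_all add: rodrigues_add[OF assms] algebra_simps)

lemma rodrigues_periodic: "rodrigues a (x - 2 * real k * pi) = rodrigues a x"
  by (simp add: rodrigues_def sin_diff cos_diff)

lemma rodrigues_in_SO3:
  assumes "norm a = 1"
  shows "rodrigues a x \<in> SO3"
proof -
  have orth: "orthogonal_matrix (rodrigues a y)" for y
    unfolding orthogonal_matrix transpose_rodrigues rodrigues_add[OF assms] by simp
  have "rodrigues a x = rodrigues a (x / 2) ** rodrigues a (x / 2)"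
    by (simp add: rodrigues_add[OF assms])
  then have "det (rodrigues a x) = det (rodrigues a (x / 2)) ^ 2"
    by (simp add: det_mul power2_eq_square)
  then have "det (rodrigues a x) \<ge> 0"
    by simp
  with det_orthogonal_matrix[OF orth, of x] have "det (rodrigues a x) = 1"
    by linarith
  with orth show ?thesis
    by (simp add: SO3_def rotation_matrix_def)
qed

lemma mpow_scaleR: "mpow (t *\<^sub>R A) k = (t ^ k) *\<^sub>R mpow A k"
  by (induction k) (simp_all add: matrix_scalar_ac scalar_matrix_assoc[symmetric])

lemma mpow_hat:
  assumes "norm a = 1"
  shows "mpow (hat a) (2 * j + 1) = (-1) ^ j *\<^sub>R hat a"
    and "mpow (hat a) (2 * j + 2) = (-1) ^ j *\<^sub>R (hat a ** hat a)"
proof (induction j)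
  case 0
  show "mpow (hat a) (2 * 0 + 1) = (-1) ^ 0 *\<^sub>R hat a"
    and "mpow (hat a) (2 * 0 + 2) = (-1) ^ 0 *\<^sub>R (hat a ** hat a)"
    by simp_all
next
  case (Suc j)
  have "2 * Suc j + 1 = Suc (2 * j + 2)"
    by simp
  then have "mpow (hat a) (2 * Suc j + 1) = mpow (hat a) (2 * j + 2) ** hat a"
    by (simp only: mpow.simps)
  also have "\<dots> = (-1) ^ j *\<^sub>R (hat a ** hat a ** hat a)"
    by (simp only: Suc.IH(2) scalar_matrix_assoc)
  also have "\<dots> = (-1) ^ Suc j *\<^sub>R hat a"
    by (simp add: hat_cube[OF assms])
  finally have odd: "mpow (hat a) (2 * Suc j + 1) = (-1) ^ Suc j *\<^sub>R hat a" .
  then show "mpow (hat a) (2 * Suc j + 1) = (-1) ^ Suc j *\<^sub>R hat a" .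
  have "2 * Suc j + 2 = Suc (2 * Suc j + 1)"
    by simp
  then have "mpow (hat a) (2 * Suc j + 2) = mpow (hat a) (2 * Suc j + 1) ** hat a"
    by (simp only: mpow.simps)
  then show "mpow (hat a) (2 * Suc j + 2) = (-1) ^ Suc j *\<^sub>R (hat a ** hat a)"
    by (simp only: odd scalar_matrix_assoc)
qed

lemma exp_series_term_hat:
  assumes "norm a = 1"
  shows "(1 / fact k) *\<^sub>R mpow (t *\<^sub>R hat a) k =
     of_bool (k = 0) *\<^sub>R mat 1 + (sin_coeff k * t ^ k) *\<^sub>R hat a
     + (of_bool (k = 0) - cos_coeff k * t ^ k) *\<^sub>R (hat a ** hat a)"
proof -
  have "k = 0 \<or> (\<exists>j. k = 2 * j + 1) \<or> (\<exists>j. k = 2 * j + 2)"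
    by presburger
  then consider "k = 0" | j where "k = 2 * j + 1" | j where "k = 2 * j + 2"
    by blast
  then show ?thesis
  proof cases
    case 1
    then show ?thesis
      by (simp add: cos_coeff_def)
  next
    case (2 j)
    then have "mpow (hat a) k = (-1) ^ j *\<^sub>R hat a" and "k \<noteq> 0"
      and "sin_coeff k = (-1) ^ j / fact k" and "cos_coeff k = 0"
      by (simp_all only: mpow_hat[OF assms]) (simp_all add: sin_coeff_def cos_coeff_def)
    then show ?thesis
      by (simp add: mpow_scaleR)
  next
    case (3 j)
    then have "mpow (hat a) k = (-1) ^ j *\<^sub>R (hat a ** hat a)" and "k \<noteq> 0"
      and "sin_coeff k = 0" and "cos_coeff k = - ((-1) ^ j / fact k)"
      by (simp_all only: mpow_hat[OF assms]) (simp_all add: sin_coeff_def cos_coeff_def)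
    then show ?thesis
      by (simp add: mpow_scaleR)
  qed
qed

lemma mexp_hat:
  assumes "norm a = 1"
  shows "mexp (t *\<^sub>R hat a) = rodrigues a t"
proof -
  have "(\<lambda>k. of_bool (k = 0) :: real) sums 1"
    using sums_single[of 0 "\<lambda>_. 1::real"] by (simp add: of_bool_def if_distrib cong: if_cong)
  moreover from sums_scaleR_left[OF this, of "mat 1"]
  have "(\<lambda>k. of_bool (k = 0) *\<^sub>R mat 1) sums (mat 1 :: mat3)"
    by simp
  ultimately have "(\<lambda>k. (1 / fact k) *\<^sub>R mpow (t *\<^sub>R hat a) k) sums rodrigues a t"
    unfolding exp_series_term_hat[OF assms] rodrigues_def
    using sin_converges[of t] cos_converges[of t]
    by (intro sums_add sums_scaleR_left sums_diff) simp_all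
  then show ?thesis
    by (simp add: mexp_def sums_iff)
qed

lemma mpow_in_SO3: "A \<in> SO3 \<Longrightarrow> mpow A m \<in> SO3"
  by (induction m) (simp_all add: mat_1_in_SO3 SO3_mult)

lemma pathprod_in_SO3:
  "(\<And>i. i \<in> {1..m} \<Longrightarrow> Rt i (i + 1) \<in> SO3) \<Longrightarrow> pathprod Rt m \<in> SO3"
  by (induction m) (simp_all add: mat_1_in_SO3 SO3_mult)

definition cyc_succ :: "nat \<Rightarrow> nat \<Rightarrow> nat" where
  "cyc_succ n i = (if i = n then 1 else i + 1)"

definition cyc_pred :: "nat \<Rightarrow> nat \<Rightarrow> nat" where
  "cyc_pred n i = (if i = 1 then n else i - 1)"

lemma cyc_succ_pred_in_nodes:
  "i \<in> {1..n} \<Longrightarrow> cyc_succ n i \<in> {1..n} \<and> cyc_pred n i \<in> {1..n}"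
  by (auto simp: cyc_succ_def cyc_pred_def)

lemma cyc_succ_pred: "i \<in> {1..n} \<Longrightarrow> cyc_succ n (cyc_pred n i) = i"
  by (auto simp: cyc_succ_def cyc_pred_def)

lemma cyc_adj_iff_succ_pred:
  "3 \<le> n \<Longrightarrow> cyc_adj n i j \<longleftrightarrow> i \<in> {1..n} \<and> j \<in> {1..n} \<and> (j = cyc_succ n i \<or> j = cyc_pred n i)"
  unfolding cyc_adj_def cyc_succ_def cyc_pred_def by auto

lemma sum_cycle_neighbours:
  assumes "3 \<le> n" and i: "i \<in> {1..n}"
    and nonadjacent: "\<And>j. j \<in> {1..n} \<Longrightarrow> j \<noteq> i \<Longrightarrow> \<not> cyc_adj n i j \<Longrightarrow> g j = 0"
  shows "(\<Sum>j\<in>{1..n}. g j) = g i + g (cyc_succ n i) + g (cyc_pred n i)"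
proof -
  have "(\<Sum>j\<in>{1..n}. g j) = (\<Sum>j\<in>{i, cyc_succ n i, cyc_pred n i}. g j)"
    using i cyc_succ_pred_in_nodes[OF i] nonadjacent cyc_adj_iff_succ_pred[OF assms(1)]
    by (intro sum.mono_neutral_right) auto
  also have "\<dots> = g i + g (cyc_succ n i) + g (cyc_pred n i)"
  proof -
    have "i \<noteq> cyc_succ n i" "i \<noteq> cyc_pred n i" "cyc_succ n i \<noteq> cyc_pred n i"
      using assms(1) i by (auto simp: cyc_succ_def cyc_pred_def)
    then show ?thesis
      by (simp add: add.assoc)
  qed
  finally show ?thesis .
qed

definition cycle_point :: "(nat \<Rightarrow> nat \<Rightarrow> mat3) \<Rightarrow> mat3 \<Rightarrow> nat \<Rightarrow> mat3" where
  "cycle_point Rt F i =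
     (if i = 1 then mat 1 else transpose (pathprod Rt (i - 1)) ** mpow F (i - 1))"

lemma cycle_point_Suc: "cycle_point Rt F (Suc m) = transpose (pathprod Rt m) ** mpow F m"
  by (simp add: cycle_point_def)

lemma cycle_point_succ_block:
  assumes "3 \<le> n" and i: "i \<in> {1..n}"
    and path_SO3: "\<And>i. i \<in> {1..<n} \<Longrightarrow> Rt i (i + 1) \<in> SO3"
    and F_SO3: "F \<in> SO3" and F_root: "mpow F n = cycle_err n Rt"
  shows "transpose (cycle_point Rt F i) ** Rt i (cyc_succ n i) ** cycle_point Rt F (cyc_succ n i) = F"
proof -
  obtain m where m: "i = Suc m"
    using i by (cases i) auto
  have P_SO3: "pathprod Rt m \<in> SO3"
    using m i path_SO3 by (intro pathprod_in_SO3) auto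
  have telescope: "transpose (cycle_point Rt F i) ** Rt i j ** Y
      = transpose (mpow F m) ** (pathprod Rt m ** Rt i j ** Y)" for j Y
    by (simp add: m cycle_point_Suc matrix_transpose_mul matrix_mul_assoc)
  have F_step: "transpose (mpow F m) ** mpow F (Suc m) = F"
    using SO3_orthogonal[OF mpow_in_SO3[OF F_SO3]] by (simp add: matrix_mul_assoc)
  show ?thesis
  proof (cases "i = n")
    case True
    have "pathprod Rt m ** Rt i 1 = mpow F (Suc m)"
      using F_root unfolding cycle_err_def True[symmetric] m by simp
    then show ?thesis
      using telescope[of 1 "mat 1"] True F_step by (simp add: cyc_succ_def cycle_point_def)
  next
    case False
    then have "Rt i (i + 1) \<in> SO3"
      using i path_SO3 by simp
    then have "pathprod Rt m ** Rt i (i + 1) ** cycle_point Rt F (i + 1) = mpow F (Suc m)"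
      using P_SO3 by (simp add: m cycle_point_Suc matrix_transpose_mul matrix_mul_assoc[symmetric]
          SO3_mult_transpose_cancel del: mpow.simps)
    then have "transpose (cycle_point Rt F i) ** Rt i (i + 1) ** cycle_point Rt F (i + 1) = F"
      by (simp only: telescope F_step)
    with False show ?thesis
      by (simp add: cyc_succ_def)
  qed
qed

lemma Rblk_symmetric:
  assumes "\<And>i j. cyc_adj n i j \<Longrightarrow> Rt j i = transpose (Rt i j)"
  shows "Rblk n Rt j i = transpose (Rblk n Rt i j)"
proof -
  have "cyc_adj n j i \<longleftrightarrow> cyc_adj n i j"
    unfolding cyc_adj_def by auto
  then show ?thesis
    using assms[of i j] by (auto simp: Rblk_def transpose_zero)
qed

theorem stationary_cycle_point:
  assumes n3: "3 \<le> n"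
    and meas_SO3: "\<And>i j. cyc_adj n i j \<Longrightarrow> Rt i j \<in> SO3"
    and meas_sym: "\<And>i j. cyc_adj n i j \<Longrightarrow> Rt j i = transpose (Rt i j)"
    and F_SO3: "F \<in> SO3" and F_root: "mpow F n = cycle_err n Rt"
  shows "stationary n Rt (cycle_point Rt F)"
proof (rule stationary_if_symmetric_block_row_sums)
  let ?P = "cycle_point Rt F" and ?I = "{1..n}"
  have path_SO3: "Rt i (i + 1) \<in> SO3" if "i \<in> {1..<n}" for i
    using that by (intro meas_SO3) (simp add: cyc_adj_def)
  show P_SO3: "?P i \<in> SO3" if i: "i \<in> ?I" for i
  proof -
    obtain m where m: "i = Suc m"
      using i by (cases i) auto
    have "pathprod Rt m \<in> SO3"
      using i m path_SO3 by (intro pathprod_in_SO3) auto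
    then show ?thesis
      by (simp add: m cycle_point_Suc SO3_mult SO3_transpose mpow_in_SO3 F_SO3)
  qed
  show Rblk_sym: "Rblk n Rt j i = transpose (Rblk n Rt i j)" for i j
    using meas_sym by (rule Rblk_symmetric)
  have succ_block: "transpose (?P i) ** Rblk n Rt i (cyc_succ n i) ** ?P (cyc_succ n i) = F"
    if "i \<in> ?I" for i
  proof -
    have "cyc_adj n i (cyc_succ n i)" and "cyc_succ n i \<noteq> i"
      using that n3 cyc_succ_pred_in_nodes[OF that]
      by (simp_all add: cyc_adj_iff_succ_pred) (auto simp: cyc_succ_def split: if_splits)
    then show ?thesis
      using cycle_point_succ_block[OF n3 that path_SO3 F_SO3 F_root] by (simp add: Rblk_def)
  qed
  fix i assume i: "i \<in> ?I"
  define B where "B j = transpose (?P i) ** Rblk n Rt i j ** ?P j" for j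
  have "(\<Sum>j\<in>?I. B j) = B i + B (cyc_succ n i) + B (cyc_pred n i)"
    using n3 i by (rule sum_cycle_neighbours) (simp add: B_def Rblk_def)
  also have "B i = mat 1"
    using SO3_orthogonal[OF P_SO3[OF i]] by (simp add: B_def Rblk_def)
  also have "B (cyc_succ n i) = F"
    unfolding B_def by (rule succ_block[OF i])
  also have "B (cyc_pred n i) = transpose F"
  proof -
    let ?p = "cyc_pred n i"
    have "B ?p = transpose (transpose (?P ?p) ** Rblk n Rt ?p i ** ?P i)"
      by (simp add: B_def Rblk_sym[of i ?p] matrix_transpose_mul matrix_mul_assoc)
    then show ?thesis
      using succ_block[of ?p] cyc_succ_pred_in_nodes[OF i] cyc_succ_pred[OF i] by simp
  qed
  finally show "transpose (\<Sum>j\<in>?I. B j) = (\<Sum>j\<in>?I. B j)"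
    by (simp add: transpose_add add_ac)
qed

theorem lemma1:
  fixes n :: nat and Rt :: "nat \<Rightarrow> nat \<Rightarrow> mat3"
    and nhat :: "real^3" and \<gamma> :: real and k :: nat
  assumes n3: "n \<ge> 3"
    and meas_SO3: "\<And>i j. cyc_adj n i j \<Longrightarrow> Rt i j \<in> SO3"
    and meas_sym: "\<And>i j. cyc_adj n i j \<Longrightarrow> Rt j i = transpose (Rt i j)"
    and common_axis: "\<exists>a::real^3. norm a = 1 \<and>
          (\<forall>i\<in>{1..<n}. \<exists>\<theta>. Rt i (i + 1) = mexp (\<theta> *\<^sub>R hat a)) \<and>
          (\<exists>\<theta>. Rt n 1 = mexp (\<theta> *\<^sub>R hat a))"
    and axis: "norm nhat = 1"
    and angle: "\<gamma> \<in> {-pi..pi}"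
    and E_rep: "cycle_err n Rt = mexp (\<gamma> *\<^sub>R hat nhat)"
    and k: "k < n"
  shows "stationary n Rt
           (\<lambda>i. if i = 1 then mat 1
                 else transpose (pathprod Rt (i - 1)) **
                      mpow (mexp ((\<gamma> / real n - 2 * real k * pi / real n) *\<^sub>R hat nhat)) (i - 1))"
proof -
  define \<theta> where "\<theta> = \<gamma> / real n - 2 * real k * pi / real n"
  define F where "F = mexp (\<theta> *\<^sub>R hat nhat)"
  have F_rodrigues: "F = rodrigues nhat \<theta>"
    by (simp add: F_def mexp_hat[OF axis])
  have "real n * \<theta> = \<gamma> - 2 * real k * pi"
    using n3 by (simp add: \<theta>_def field_simps)
  then have "mpow F n = cycle_err n Rt"
    by (simp add: F_rodrigues mpow_rodrigues[OF axis] rodrigues_periodic E_rep mexp_hat[OF axis])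
  moreover have "F \<in> SO3"
    by (simp add: F_rodrigues rodrigues_in_SO3[OF axis])
  ultimately have "stationary n Rt (cycle_point Rt F)"
    by (intro stationary_cycle_point n3 meas_SO3 meas_sym)
  then show ?thesis
    unfolding cycle_point_def[abs_def] F_def \<theta>_def .
qed

end
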